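(* There exists a family of $n$-bit communication problems $F_n:\{0,1\}^n\times\{0,1\}^n\to\{0,1\}$ with $\mathsf{PP}(F_n)=O(\log n)$ and $\mathrm{rect}(F_n)^{-1}=2^{\Omega(n)}$. In particular, $\mathsf{D}^{\mathsf{NP}}(F_n)=\Omega(n)$, and the communication class $\mathsf{PP}$ is not contained in the communication class $\mathsf{P}^{\mathsf{NP}}$.
   Context: For a Boolean matrix $F\in\{0,1\}^{\mathcal X\times\mathcal Y}$: a monochromatic rectangle is a set $S\times T$ ($S\subseteq\mathcal X,T\subseteq\mathcal Y$) on which $F$ is constant, and $\mathrm{rect}(F)=\max_R |R|/|\mathcal X\times\mathcal Y|$ over monochromatic rectangles $R$. A deterministic protocol is a binary tree whose internal nodes are owned by Alice (labelled by a function of $x$ into $\{0,1\}$) or Bob (a function of $y$); the leaf reached on $(x,y)$ gives the output; cost is the height. A nondeterministic protocol is a family of deterministic protocols $\pi_a$ indexed by advice strings $a\in\{0,1\}^k$, computing $F$ if $F(x,y)=1\iff\exists a:\pi_a(x,y)=1$, with cost $k$ plus the maximum cost of the $\pi_a$; $\mathsf{N}(F)$ is the minimum such cost. An oracle protocol is a deterministic protocol tree in which some internal nodes $v$ are instead labelled by a triple $(P_v,a_v,b_v)$, where $P_v$ is a Boolean matrix on some $\mathcal X'\times\mathcal Y'$, $a_v:\mathcal X\to\mathcal X'$, $b_v:\mathcal Y\to\mathcal Y'$, and the branch taken at $v$ is $P_v(a_v(x),b_v(y))$. The $\mathsf{D}^{\mathsf{NP}}$ cost of a root-to-leaf path is the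 number of communicated bits on it plus $\sum_v \mathsf{N}(P_v)$ over oracle nodes $v$ on it; the cost of the protocol is the maximum over paths, and $\mathsf{D}^{\mathsf{NP}}(F)$ is the minimum cost of an oracle protocol computing $F$. A public-coin randomized protocol is a probability distribution over deterministic protocols (chosen using shared randomness), with cost the maximum cost of the protocols in the support; $\mathsf{R}_\epsilon(F)$ is the minimum cost of such a protocol whose output differs from $F(x,y)$ with probability at most $\epsilon$ for every input $(x,y)$. Define $\mathsf{PP}(F)=\min_{\epsilon<1/2}\big(\mathsf{R}_\epsilon(F)+\log_2\frac{1}{1/2-\epsilon}\big)$. The class $\mathsf{PP}$ (resp. $\mathsf{P}^{\mathsf{NP}}$) consists of families of $n$-bit problems $F_n$ (matrices with $\lceil\log_2\max(|\mathcal X|,|\mathcal Y|)\rceil=n$) with $\mathsf{PP}(F_n)$ (resp. $\mathsf{D}^{\mathsf{NP}}(F_n)$) bounded by a polylogarithmic function of $n$. *)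

theory Defs
  imports "HOL-Probability.Probability_Mass_Function" "HOL-Library.Extended_Real"
begin

definition bits :: "nat \<Rightarrow> bool list set" where
  "bits n = {xs. length xs = n}"

text \<open>Oracle nodes carry a Boolean matrix P on the
carrier A \<times> B (A, B sets of naturals) and maps a, b of the inputs into A, B.\<close>
datatype ('x, 'y) proto =
    Leaf bool
  | Alice "'x \<Rightarrow> bool" "('x, 'y) proto" "('x, 'y) proto"
  | Bob "'y \<Rightarrow> bool" "('x, 'y) proto" "('x, 'y) proto"
  | Oracle "nat set" "nat set" "nat \<Rightarrow> nat \<Rightarrow> bool" "'x \<Rightarrow> nat" "'y \<Rightarrow> nat"
      "('x, 'y) proto" "('x, 'y) proto"

fun eval :: "('x, 'y) proto \<Rightarrow> 'x \<Rightarrow> 'y \<Rightarrow> bool" where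
  "eval (Leaf b) x y = b"
| "eval (Alice f l r) x y = (if f x then eval r x y else eval l x y)"
| "eval (Bob g l r) x y = (if g y then eval r x y else eval l x y)"
| "eval (Oracle A B P a b l r) x y = (if P (a x) (b y) then eval r x y else eval l x y)"

fun plain :: "('x, 'y) proto \<Rightarrow> bool" where
  "plain (Leaf b) = True"
| "plain (Alice f l r) = (plain l \<and> plain r)"
| "plain (Bob g l r) = (plain l \<and> plain r)"
| "plain (Oracle A B P a b l r) = False"

fun depth :: "('x, 'y) proto \<Rightarrow> nat" where
  "depth (Leaf b) = 0"
| "depth (Alice f l r) = Suc (max (depth l) (depth r))"
| "depth (Bob g l r) = Suc (max (depth l) (depth r))"
| "depth (Oracle A B P a b l r) = Suc (max (depth l) (depth r))"

definition nd_protocol ::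
  "'x set \<Rightarrow> 'y set \<Rightarrow> ('x \<Rightarrow> 'y \<Rightarrow> bool) \<Rightarrow> nat \<Rightarrow> bool" where
  "nd_protocol X Y F m \<longleftrightarrow>
     (\<exists>k (\<pi> :: bool list \<Rightarrow> ('x, 'y) proto).
        (\<forall>a. length a = k \<longrightarrow> plain (\<pi> a) \<and> k + depth (\<pi> a) \<le> m) \<and>
        (\<forall>x\<in>X. \<forall>y\<in>Y. F x y \<longleftrightarrow> (\<exists>a. length a = k \<and> eval (\<pi> a) x y)))"

text \<open>Nondeterministic communication complexity N(F) (infinite if no protocol exists).\<close>
definition Ncost :: "'x set \<Rightarrow> 'y set \<Rightarrow> ('x \<Rightarrow> 'y \<Rightarrow> bool) \<Rightarrow> enat" where
  "Ncost X Y F = (INF m \<in> {m. nd_protocol X Y F m}. enat m)"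

fun wf_oracles :: "'x set \<Rightarrow> 'y set \<Rightarrow> ('x, 'y) proto \<Rightarrow> bool" where
  "wf_oracles X Y (Leaf b) = True"
| "wf_oracles X Y (Alice f l r) = (wf_oracles X Y l \<and> wf_oracles X Y r)"
| "wf_oracles X Y (Bob g l r) = (wf_oracles X Y l \<and> wf_oracles X Y r)"
| "wf_oracles X Y (Oracle A B P a b l r) =
     (a ` X \<subseteq> A \<and> b ` Y \<subseteq> B \<and> wf_oracles X Y l \<and> wf_oracles X Y r)"

fun npcost :: "('x, 'y) proto \<Rightarrow> enat" where
  "npcost (Leaf b) = 0"
| "npcost (Alice f l r) = 1 + max (npcost l) (npcost r)"
| "npcost (Bob g l r) = 1 + max (npcost l) (npcost r)"
| "npcost (Oracle A B P a b l r) = Ncost A B P + max (npcost l) (npcost r)"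

definition DNP :: "'x set \<Rightarrow> 'y set \<Rightarrow> ('x \<Rightarrow> 'y \<Rightarrow> bool) \<Rightarrow> enat" where
  "DNP X Y F = (INF T \<in> {T. wf_oracles X Y T \<and> (\<forall>x\<in>X. \<forall>y\<in>Y. eval T x y = F x y)}. npcost T)"

text \<open>Public-coin randomized protocol of cost at most c and error at most eps.\<close>
definition rand_protocol ::
  "'x set \<Rightarrow> 'y set \<Rightarrow> ('x \<Rightarrow> 'y \<Rightarrow> bool) \<Rightarrow> ('x, 'y) proto pmf \<Rightarrow> nat \<Rightarrow> real \<Rightarrow> bool" where
  "rand_protocol X Y F \<mu> c \<epsilon> \<longleftrightarrow>
     (\<forall>T\<in>set_pmf \<mu>. plain T \<and> depth T \<le> c) \<and>
     (\<forall>x\<in>X. \<forall>y\<in>Y. measure_pmf.prob \<mu> {T. eval T x y \<noteq> F x y} \<le> \<epsilon>)"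

definition PPcost :: "'x set \<Rightarrow> 'y set \<Rightarrow> ('x \<Rightarrow> 'y \<Rightarrow> bool) \<Rightarrow> real" where
  "PPcost X Y F = Inf {real c + log 2 (1 / (1/2 - \<epsilon>)) | c \<epsilon>.
       \<epsilon> < 1/2 \<and> (\<exists>\<mu>. rand_protocol X Y F \<mu> c \<epsilon>)}"

definition mono_rect :: "'x set \<Rightarrow> 'y set \<Rightarrow> ('x \<Rightarrow> 'y \<Rightarrow> bool) \<Rightarrow> 'x set \<Rightarrow> 'y set \<Rightarrow> bool" where
  "mono_rect X Y F S T \<longleftrightarrow> S \<subseteq> X \<and> T \<subseteq> Y \<and> (\<exists>b. \<forall>x\<in>S. \<forall>y\<in>T. F x y = b)"

definition rect :: "'x set \<Rightarrow> 'y set \<Rightarrow> ('x \<Rightarrow> 'y \<Rightarrow> bool) \<Rightarrow> real" where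
  "rect X Y F = Max {real (card (S \<times> T)) / real (card (X \<times> Y)) | S T. mono_rect X Y F S T}"

definition nbit_family :: "(nat \<Rightarrow> 'x set) \<Rightarrow> (nat \<Rightarrow> 'y set) \<Rightarrow> bool" where
  "nbit_family Xs Ys \<longleftrightarrow> (\<forall>n. finite (Xs n) \<and> finite (Ys n) \<and> Xs n \<noteq> {} \<and> Ys n \<noteq> {} \<and>
      \<lceil>log 2 (real (max (card (Xs n)) (card (Ys n))))\<rceil> = int n)"

definition in_PP :: "(nat \<Rightarrow> 'x set) \<Rightarrow> (nat \<Rightarrow> 'y set) \<Rightarrow> (nat \<Rightarrow> 'x \<Rightarrow> 'y \<Rightarrow> bool) \<Rightarrow> bool" where
  "in_PP Xs Ys F \<longleftrightarrow> nbit_family Xs Ys \<and>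
     (\<exists>C k. \<forall>n\<ge>2. PPcost (Xs n) (Ys n) (F n) \<le> C * (log 2 (real n)) ^ k)"

definition in_PNP :: "(nat \<Rightarrow> 'x set) \<Rightarrow> (nat \<Rightarrow> 'y set) \<Rightarrow> (nat \<Rightarrow> 'x \<Rightarrow> 'y \<Rightarrow> bool) \<Rightarrow> bool" where
  "in_PNP Xs Ys F \<longleftrightarrow> nbit_family Xs Ys \<and>
     (\<exists>C k. \<forall>n\<ge>2. ereal_of_enat (DNP (Xs n) (Ys n) (F n)) \<le> ereal (C * (log 2 (real n)) ^ k))"

end

theory Submission
  imports Defs "HOL-Real_Asymp.Real_Asymp"
begin

(* The problem is the Hamming threshold F n x y = [2 dist(x, y) < n].

   Comparing one random coordinate, and rejecting outright on one extra outcome to break the tie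
   at distance n/2, is a protocol of cost 2 with error n/(2n+1); hence PP(F n) = O(log n).

   A monochromatic rectangle S x T of F n (after complementing T if it is a 0-rectangle) consists
   of two families of subsets of {..<n} at cross distance at most n/2.  Shifting both families
   down in a coordinate preserves this, so they may be assumed down-closed; then every pair
   satisfies |x \<union> y| <= n/2, and weighting pairs by 3^-|x \<union> y| shows that there are at most
   2^n 3^(n/2) such pairs.  Thus rect(F n) <= 2^(-n/5).

   Conversely, an oracle protocol of D^NP cost c has a monochromatic rectangle of density
   2^(-5c): a communication node keeps the larger half of one side, and an oracle node whose
   matrix has nondeterministic cost k >= 1 is, on the current rectangle, a union of 2^k
   rectangles; either one of them meets a 2^-(k+1) fraction of both sides, or each can be avoided
   by discarding that fraction of one side, which loses a factor 2^(2k+3) <= 2^(5k) in all.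
   Hence D^NP(F n) >= n/25, which no polylogarithm bounds. *)

section \<open>Down-shifts of set families\<close>

definition down_shift :: "'a \<Rightarrow> 'a set set \<Rightarrow> 'a set set" where
  "down_shift i S = (\<lambda>x. x - {i}) ` {x \<in> S. x - {i} \<notin> S} \<union> {x \<in> S. x - {i} \<in> S}"

definition weight :: "'a set set \<Rightarrow> nat" where
  "weight S = (\<Sum>x\<in>S. card x)"

definition cross_dist_le :: "nat \<Rightarrow> 'a set set \<Rightarrow> 'a set set \<Rightarrow> bool" where
  "cross_dist_le r S T \<longleftrightarrow> (\<forall>x\<in>S. \<forall>y\<in>T. card (sym_diff x y) \<le> r)"

definition down_closed :: "'a set set \<Rightarrow> bool" where
  "down_closed S \<longleftrightarrow> (\<forall>x\<in>S. \<forall>i. x - {i} \<in> S)"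

lemma down_shift_eq:
  "down_shift i S = (\<lambda>x. x - {i}) ` {x \<in> S. x - {i} \<notin> S} \<union> (S - {x \<in> S. x - {i} \<notin> S})"
  "(\<lambda>x. x - {i}) ` {x \<in> S. x - {i} \<notin> S} \<inter> (S - {x \<in> S. x - {i} \<notin> S}) = {}"
  "inj_on (\<lambda>x. x - {i}) {x \<in> S. x - {i} \<notin> S}"
proof -
  show "down_shift i S = (\<lambda>x. x - {i}) ` {x \<in> S. x - {i} \<notin> S} \<union> (S - {x \<in> S. x - {i} \<notin> S})"
    by (auto simp: down_shift_def)
  show "(\<lambda>x. x - {i}) ` {x \<in> S. x - {i} \<notin> S} \<inter> (S - {x \<in> S. x - {i} \<notin> S}) = {}"
    by auto
  show "inj_on (\<lambda>x. x - {i}) {x \<in> S. x - {i} \<notin> S}"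
    by (rule inj_onI) (metis insert_Diff Diff_insert0 Diff_empty mem_Collect_eq)
qed

lemma card_down_shift:
  assumes "finite S"
  shows "card (down_shift i S) = card S"
proof -
  let ?M = "{x \<in> S. x - {i} \<notin> S}"
  have "card (down_shift i S) = card ?M + card (S - ?M)"
    using assms down_shift_eq[of i S] by (simp add: card_Un_disjoint card_image)
  then show ?thesis
    using assms by (simp add: card_Diff_subset card_mono)
qed

lemma weight_down_shift:
  assumes "finite S" and "\<forall>x\<in>S. finite x"
  shows "weight (down_shift i S) + card {x \<in> S. x - {i} \<notin> S} = weight S"
proof -
  let ?M = "{x \<in> S. x - {i} \<notin> S}"
  have "card (x - {i}) + 1 = card x" if "x \<in> ?M" for x
  proof -
    have "i \<in> x" using that by (metis (mono_tags, lifting) Diff_empty Diff_insert0 mem_Collect_eq)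
    then show ?thesis using that assms(2) card_Suc_Diff1[of x i] by simp
  qed
  then have "(\<Sum>x\<in>?M. card x) = (\<Sum>x\<in>?M. card (x - {i}) + 1)"
    by (intro sum.cong) auto
  also have "\<dots> = (\<Sum>x\<in>?M. card (x - {i})) + card ?M"
    by (simp only: sum.distrib card_eq_sum)
  finally have "(\<Sum>x\<in>?M. card (x - {i})) + card ?M = (\<Sum>x\<in>?M. card x)" ..
  moreover have "weight (down_shift i S) = (\<Sum>x\<in>(\<lambda>x. x - {i}) ` ?M. card x) + (\<Sum>x\<in>S - ?M. card x)"
    unfolding weight_def down_shift_eq(1) using assms(1) down_shift_eq(2)
    by (intro sum.union_disjoint) auto
  moreover have "(\<Sum>x\<in>(\<lambda>x. x - {i}) ` ?M. card x) = (\<Sum>x\<in>?M. card (x - {i}))"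
    using sum.reindex[OF down_shift_eq(3), of card] by simp
  moreover have "weight S = (\<Sum>x\<in>S - ?M. card x) + (\<Sum>x\<in>?M. card x)"
    unfolding weight_def using assms(1) by (intro sum.subset_diff) auto
  ultimately show ?thesis by linarith
qed

lemma down_shift_Pow: "S \<subseteq> Pow N \<Longrightarrow> down_shift i S \<subseteq> Pow N"
  by (auto simp: down_shift_def)

lemma down_shift_memD:
  assumes "u \<in> down_shift i S"
  shows "u \<in> S \<or> insert i u \<in> S" and "i \<in> u \<Longrightarrow> u \<in> S \<and> u - {i} \<in> S"
proof -
  from assms consider (moved) x where "x \<in> S" "x - {i} \<notin> S" "u = x - {i}"
    | (kept) "u \<in> S" "u - {i} \<in> S"
    unfolding down_shift_def by blast
  then have "u \<in> S \<and> u - {i} \<in> S \<or> i \<notin> u \<and> insert i u \<in> S"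
  proof cases
    case moved
    then have "i \<in> x" by (metis Diff_empty Diff_insert0)
    with moved show ?thesis by (simp add: insert_absorb)
  qed simp
  then show "u \<in> S \<or> insert i u \<in> S" "i \<in> u \<Longrightarrow> u \<in> S \<and> u - {i} \<in> S" by auto
qed

lemma down_shift_pair_witness:
  assumes u: "u \<in> down_shift i S" and v: "v \<in> down_shift i T" and "u \<notin> S"
  obtains x y where "x \<in> S" "y \<in> T" "sym_diff u v \<subseteq> sym_diff x y"
proof -
  have "i \<notin> u" "insert i u \<in> S" using down_shift_memD[OF u] \<open>u \<notin> S\<close> by auto
  consider "v \<in> T" "i \<in> v" | "v \<in> T" "i \<notin> v" | "v \<notin> T" by blast
  then show thesis
  proof cases
    case 1
    then have "v - {i} \<in> T" using down_shift_memD(2)[OF v] by blast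
    with \<open>insert i u \<in> S\<close> show thesis using \<open>i \<notin> u\<close> 1 by (intro that) auto
  next
    case 2
    with \<open>insert i u \<in> S\<close> \<open>i \<notin> u\<close> show thesis by (intro that) auto
  next
    case 3
    then have "insert i v \<in> T" "i \<notin> v" using down_shift_memD[OF v] by auto
    with \<open>insert i u \<in> S\<close> \<open>i \<notin> u\<close> show thesis by (intro that) auto
  qed
qed

text \<open>Both families are shifted in the same coordinate, so every pair of the shifted families
is at most as far apart as some pair of the original families.\<close>
lemma cross_dist_le_down_shift:
  assumes N: "finite N" "S \<subseteq> Pow N" "T \<subseteq> Pow N" and ST: "cross_dist_le r S T"
  shows "cross_dist_le r (down_shift i S) (down_shift i T)"
  unfolding cross_dist_le_def
proof (intro ballI)
  fix u v assume u: "u \<in> down_shift i S" and v: "v \<in> down_shift i T"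
  obtain x y where "x \<in> S" "y \<in> T" "sym_diff u v \<subseteq> sym_diff x y"
  proof -
    consider "u \<in> S" "v \<in> T" | "u \<notin> S" | "v \<notin> T" by blast
    then show thesis
    proof cases
      case 3
      then obtain y x where "y \<in> T" "x \<in> S" "sym_diff v u \<subseteq> sym_diff y x"
        using down_shift_pair_witness[OF v u] by blast
      then show thesis using that[of x y] by blast
    qed (use that down_shift_pair_witness[OF u v] in blast)+
  qed
  moreover have "finite (sym_diff x y)"
    using N \<open>x \<in> S\<close> \<open>y \<in> T\<close> by (auto intro: finite_subset)
  ultimately show "card (sym_diff u v) \<le> r"
    using ST by (meson card_mono cross_dist_le_def order_trans)
qed

text \<open>A pair of minimal total weight among all pairs with the same sizes is fixed by every shift.\<close>
lemma obtain_down_closed_cross_dist_le: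
  assumes N: "finite N" "S \<subseteq> Pow N" "T \<subseteq> Pow N" and ST: "cross_dist_le r S T"
  obtains S' T' where "S' \<subseteq> Pow N" "T' \<subseteq> Pow N" "card S' = card S" "card T' = card T"
    "cross_dist_le r S' T'" "down_closed S'" "down_closed T'"
proof -
  define admissible where "admissible = (\<lambda>(S', T'). S' \<subseteq> Pow N \<and> T' \<subseteq> Pow N \<and>
    card S' = card S \<and> card T' = card T \<and> cross_dist_le r S' T')"
  obtain S' T' where adm: "admissible (S', T')"
    and least: "\<And>p. admissible p \<Longrightarrow> weight S' + weight T' \<le> weight (fst p) + weight (snd p)"
    using ex_has_least_nat[of admissible "(S, T)" "\<lambda>p. weight (fst p) + weight (snd p)"] N ST
    by (auto simp: admissible_def)
  have S': "S' \<subseteq> Pow N" "finite S'" "\<forall>x\<in>S'. finite x"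
    and T': "T' \<subseteq> Pow N" "finite T'" "\<forall>x\<in>T'. finite x"
    using adm N by (auto simp: admissible_def finite_subset intro: rev_finite_subset)
  have "{x \<in> S'. x - {i} \<notin> S'} = {} \<and> {x \<in> T'. x - {i} \<notin> T'} = {}" for i
  proof -
    have "admissible (down_shift i S', down_shift i T')"
      using adm N by (auto simp: admissible_def card_down_shift down_shift_Pow
          cross_dist_le_down_shift S' T')
    from least[OF this] weight_down_shift[OF S'(2,3), of i] weight_down_shift[OF T'(2,3), of i]
    have "card {x \<in> S'. x - {i} \<notin> S'} = 0 \<and> card {x \<in> T'. x - {i} \<notin> T'} = 0" by simp
    then show ?thesis using S'(2) T'(2) by simp
  qed
  then have "down_closed S'" "down_closed T'" unfolding down_closed_def by blast+
  with adm show thesis using that[of S' T'] by (auto simp: admissible_def)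
qed

lemma down_closed_Diff:
  assumes "down_closed S" "x \<in> S" "finite D"
  shows "x - D \<in> S"
  using assms(3)
proof (induction D rule: finite_induct)
  case (insert d D)
  then show ?case using assms(1) unfolding down_closed_def by (metis Diff_insert)
qed (use assms(2) in simp)

lemma card_Un_le_if_down_closed:
  assumes "down_closed S" "cross_dist_le r S T" "x \<in> S" "y \<in> T" "finite y"
  shows "card (x \<union> y) \<le> r"
proof -
  have "sym_diff (x - y) y = x \<union> y" by blast
  moreover have "x - y \<in> S" using assms down_closed_Diff by blast
  ultimately show ?thesis using assms(2,4) unfolding cross_dist_le_def by metis
qed

lemma sum_Pow_insert:
  fixes g :: "'a set \<Rightarrow> 'b::comm_monoid_add"
  assumes "finite N" "a \<notin> N"
  shows "(\<Sum>x\<in>Pow (insert a N). g x) = (\<Sum>x\<in>Pow N. g x + g (insert a x))"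
proof -
  have "inj_on (insert a) (Pow N)"
    using assms(2) by (intro inj_onI) (metis PowD insert_ident subsetD)
  then show ?thesis
    using assms unfolding Pow_insert
    by (subst sum.union_disjoint) (auto simp: sum.reindex sum.distrib)
qed

lemma sum_third_power_card_Un:
  assumes "finite N"
  shows "(\<Sum>x\<in>Pow N. \<Sum>y\<in>Pow N. (1/3::real) ^ card (x \<union> y)) = 2 ^ card N"
  using assms
proof (induction N rule: finite_induct)
  case (insert a N)
  define g where "g x y = (1/3::real) ^ card (x \<union> y)" for x y :: "'a set"
  have g_insert: "g (insert a x) y = g x y / 3" "g x (insert a y) = g x y / 3"
    "g (insert a x) (insert a y) = g x y / 3" if "x \<in> Pow N" "y \<in> Pow N" for x y
  proof -
    have "card (insert a (x \<union> y)) = Suc (card (x \<union> y))"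
      using that insert.hyps by (intro card_insert_disjoint) (auto intro: finite_subset)
    then show "g (insert a x) y = g x y / 3" "g x (insert a y) = g x y / 3"
      "g (insert a x) (insert a y) = g x y / 3"
      by (simp_all add: g_def)
  qed
  have "(\<Sum>x\<in>Pow (insert a N). \<Sum>y\<in>Pow (insert a N). g x y) =
      (\<Sum>x\<in>Pow N. \<Sum>y\<in>Pow N. g x y + g x (insert a y) + (g (insert a x) y + g (insert a x) (insert a y)))"
    using insert.hyps by (simp add: sum_Pow_insert sum.distrib)
  also have "\<dots> = (\<Sum>x\<in>Pow N. \<Sum>y\<in>Pow N. 2 * g x y)"
    by (intro sum.cong refl) (simp add: g_insert)
  finally show ?case
    using insert.IH insert.hyps by (simp add: g_def sum_distrib_left[symmetric])
qed simp

lemma card_pairs_card_Un_le: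
  assumes "finite N"
  shows "card {(x, y) \<in> Pow N \<times> Pow N. card (x \<union> y) \<le> r} \<le> 2 ^ card N * 3 ^ r"
proof -
  let ?G = "{(x, y) \<in> Pow N \<times> Pow N. card (x \<union> y) \<le> r}"
  have "real (card ?G) * (1/3) ^ r = (\<Sum>(x, y)\<in>?G. (1/3::real) ^ r)" by simp
  also have "\<dots> \<le> (\<Sum>(x, y)\<in>?G. (1/3::real) ^ card (x \<union> y))"
    by (intro sum_mono) (auto intro: power_decreasing)
  also have "\<dots> \<le> (\<Sum>(x, y)\<in>Pow N \<times> Pow N. (1/3::real) ^ card (x \<union> y))"
    using assms by (intro sum_mono2) auto
  also have "\<dots> = 2 ^ card N"
    using sum_third_power_card_Un[OF assms] by (simp add: sum.cartesian_product)
  finally have "real (card ?G) \<le> real (2 ^ card N * 3 ^ r)"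
    by (simp add: field_simps power_divide)
  then show ?thesis by (simp only: of_nat_le_iff)
qed

lemma card_mult_le_if_cross_dist_le:
  assumes "finite N" "S \<subseteq> Pow N" "T \<subseteq> Pow N" "cross_dist_le r S T"
  shows "card S * card T \<le> 2 ^ card N * 3 ^ r"
proof -
  obtain S' T' where S'T': "S' \<subseteq> Pow N" "T' \<subseteq> Pow N" "card S' = card S" "card T' = card T"
    "cross_dist_le r S' T'" "down_closed S'" "down_closed T'"
    by (rule obtain_down_closed_cross_dist_le[OF assms])
  have "card (x \<union> y) \<le> r" if "x \<in> S'" "y \<in> T'" for x y
    using card_Un_le_if_down_closed[OF S'T'(6,5) that] S'T'(2) that(2) assms(1)
    by (meson PowD finite_subset subsetD)
  with S'T'(1,2) have "S' \<times> T' \<subseteq> {(x, y) \<in> Pow N \<times> Pow N. card (x \<union> y) \<le> r}"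
    by auto
  moreover have "finite {(x, y) \<in> Pow N \<times> Pow N. card (x \<union> y) \<le> r}"
    by (rule finite_subset[of _ "Pow N \<times> Pow N"]) (use assms(1) in auto)
  ultimately have "card (S' \<times> T') \<le> card {(x, y) \<in> Pow N \<times> Pow N. card (x \<union> y) \<le> r}"
    by (rule card_mono[rotated])
  then have "card (S' \<times> T') \<le> 2 ^ card N * 3 ^ r"
    using card_pairs_card_Un_le[OF assms(1), of r] by linarith
  with S'T' show ?thesis by (simp add: card_cartesian_product)
qed

lemma card_sym_diff_compl:
  assumes "finite N" "x \<subseteq> N" "y \<subseteq> N"
  shows "card (sym_diff x (N - y)) = card N - card (sym_diff x y)"
proof -
  have "sym_diff x (N - y) = N - sym_diff x y" using assms by blast
  moreover have "sym_diff x y \<subseteq> N" using assms by blast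
  ultimately show ?thesis using assms by (simp add: card_Diff_subset finite_subset)
qed

text \<open>For a 0-rectangle, complementing the second family turns far pairs into close ones.\<close>
lemma card_mult_le_if_threshold_const:
  assumes N: "finite N" "S \<subseteq> Pow N" "T \<subseteq> Pow N"
    and const: "\<forall>x\<in>S. \<forall>y\<in>T. (2 * card (sym_diff x y) < card N) = b"
  shows "card S * card T \<le> 2 ^ card N * 3 ^ (card N div 2)"
proof (cases b)
  case True
  then have "cross_dist_le (card N div 2) S T"
    using const unfolding cross_dist_le_def by fastforce
  then show ?thesis using card_mult_le_if_cross_dist_le N by blast
next
  case False
  let ?T = "(\<lambda>y. N - y) ` T"
  have "inj_on (\<lambda>y. N - y) T" using N(3) by (intro inj_onI) (metis Diff_Diff_Int Int_absorb1 PowD subsetD)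
  then have "card ?T = card T" by (rule card_image)
  moreover have "cross_dist_le (card N div 2) S ?T"
    using const False N by (fastforce simp: cross_dist_le_def card_sym_diff_compl)
  moreover have "?T \<subseteq> Pow N" by blast
  ultimately show ?thesis using card_mult_le_if_cross_dist_le N by metis
qed

section \<open>The Hamming threshold problem and its monochromatic rectangles\<close>

lemma finite_bits [simp]: "finite (bits n)"
  and card_bits: "card (bits n) = 2 ^ n"
  using finite_lists_length_eq[of "UNIV :: bool set" n] card_lists_length_eq[of "UNIV :: bool set" n]
  by (simp_all add: bits_def)

lemma replicate_in_bits: "replicate n b \<in> bits n"
  by (simp add: bits_def)

definition bitset :: "bool list \<Rightarrow> nat set" where
  "bitset x = {i. i < length x \<and> x ! i}"

lemma bij_betw_bitset: "bij_betw bitset (bits n) (Pow {..<n})"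
proof (rule bij_betw_imageI)
  show "inj_on bitset (bits n)"
    by (intro inj_onI nth_equalityI) (auto simp: bits_def bitset_def set_eq_iff)
  have "s = bitset (map (\<lambda>i. i \<in> s) [0..<n])" if "s \<subseteq> {..<n}" for s
    using that by (auto simp: bitset_def)
  then show "bitset ` bits n = Pow {..<n}"
    by (auto simp: bits_def bitset_def intro!: image_eqI)
qed

definition hamming_dist :: "bool list \<Rightarrow> bool list \<Rightarrow> nat" where
  "hamming_dist x y = card {i. i < length x \<and> x ! i \<noteq> y ! i}"

lemma hamming_dist_bitset:
  "length x = length y \<Longrightarrow> hamming_dist x y = card (sym_diff (bitset x) (bitset y))"
  unfolding hamming_dist_def bitset_def by (rule arg_cong[where f = card]) auto

definition hamming_close :: "nat \<Rightarrow> bool list \<Rightarrow> bool list \<Rightarrow> bool" where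
  "hamming_close n x y \<longleftrightarrow> 2 * hamming_dist x y < n"

lemma finite_rect_ratios:
  "finite X \<Longrightarrow> finite Y \<Longrightarrow>
    finite {real (card (S \<times> T)) / real (card (X \<times> Y)) | S T. mono_rect X Y F S T}"
  by (rule finite_subset[where B = "(\<lambda>(S, T). real (card (S \<times> T)) / real (card (X \<times> Y))) ` (Pow X \<times> Pow Y)"])
    (auto simp: mono_rect_def)

lemma mono_rect_le_rect:
  "finite X \<Longrightarrow> finite Y \<Longrightarrow> mono_rect X Y F S T \<Longrightarrow>
    real (card (S \<times> T)) / real (card (X \<times> Y)) \<le> rect X Y F"
  unfolding rect_def by (rule Max_ge[OF finite_rect_ratios]) auto

lemma rect_le:
  assumes "finite X" "finite Y"
    and "\<And>S T. mono_rect X Y F S T \<Longrightarrow> real (card (S \<times> T)) / real (card (X \<times> Y)) \<le> v"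
  shows "rect X Y F \<le> v"
proof -
  have "mono_rect X Y F {} {}" by (simp add: mono_rect_def)
  then show ?thesis
    unfolding rect_def using assms by (subst Max_le_iff[OF finite_rect_ratios]) auto
qed

lemma rect_pos:
  assumes "finite X" "finite Y" "x \<in> X" "y \<in> Y"
  shows "0 < rect X Y F"
proof -
  have "card (X \<times> Y) > 0"
    using assms by (auto simp: card_cartesian_product card_gt_0_iff)
  then have "0 < real (card ({x} \<times> {y})) / real (card (X \<times> Y))" by simp
  also have "\<dots> \<le> rect X Y F"
    using assms by (intro mono_rect_le_rect) (auto simp: mono_rect_def)
  finally show ?thesis .
qed

lemma rect_hamming_close_le: "rect (bits n) (bits n) (hamming_close n) \<le> 3 ^ (n div 2) / 2 ^ n"
proof (rule rect_le)
  fix S T assume "mono_rect (bits n) (bits n) (hamming_close n) S T"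
  then obtain b where ST: "S \<subseteq> bits n" "T \<subseteq> bits n"
    and const: "\<forall>x\<in>S. \<forall>y\<in>T. hamming_close n x y = b"
    by (auto simp: mono_rect_def)
  have inj: "inj_on bitset S" "inj_on bitset T"
    using ST bij_betw_bitset[of n] by (auto simp: bij_betw_def intro: inj_on_subset)
  have Pow: "bitset ` S \<subseteq> Pow {..<n}" "bitset ` T \<subseteq> Pow {..<n}"
    using ST bij_betw_bitset[of n] by (auto simp: bij_betw_def)
  have "hamming_dist x y = card (sym_diff (bitset x) (bitset y))" if "x \<in> S" "y \<in> T" for x y
    using that ST by (intro hamming_dist_bitset) (auto simp: bits_def)
  with const have "\<forall>u\<in>bitset ` S. \<forall>v\<in>bitset ` T. (2 * card (sym_diff u v) < card {..<n}) = b"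
    by (auto simp: hamming_close_def)
  from card_mult_le_if_threshold_const[OF _ Pow this]
  have "card S * card T \<le> 2 ^ n * 3 ^ (n div 2)"
    using inj by (simp add: card_image)
  then have "real (card (S \<times> T)) \<le> real (2 ^ n * 3 ^ (n div 2))"
    by (simp only: card_cartesian_product of_nat_le_iff)
  then show "real (card (S \<times> T)) / real (card (bits n \<times> bits n)) \<le> 3 ^ (n div 2) / 2 ^ n"
    by (simp add: card_cartesian_product card_bits field_simps)
qed simp_all

lemma two_powr_mult_three_power_le: "2 powr (real n / 5) * 3 ^ (n div 2) \<le> (2::real) ^ n"
proof -
  have "((3::real) ^ (n div 2)) ^ 5 = (3 ^ 5) ^ (n div 2)"
    by (metis power_mult mult.commute)
  also have "\<dots> = 243 ^ (n div 2)" by simp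
  also have "\<dots> \<le> 256 ^ (n div 2)" by (simp add: power_mono)
  also have "\<dots> = 2 ^ (8 * (n div 2))" by (simp add: power_mult)
  also have "\<dots> \<le> 2 ^ (4 * n)" by (intro power_increasing) auto
  finally have "(2 powr (real n / 5) * 3 ^ (n div 2)) ^ 5 \<le> 2 ^ n * 2 ^ (4 * n)"
    by (simp add: power_mult_distrib powr_power powr_realpow)
  also have "\<dots> = ((2::real) ^ n) ^ 5" by (simp flip: power_add power_mult)
  finally show ?thesis by (subst (asm) power_mono_iff) auto
qed

lemma inverse_rect_hamming_close_ge:
  "2 powr (real n / 5) \<le> 1 / rect (bits n) (bits n) (hamming_close n)"
proof -
  have pos: "0 < rect (bits n) (bits n) (hamming_close n)"
    using replicate_in_bits by (intro rect_pos) auto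
  have "2 powr (real n / 5) * rect (bits n) (bits n) (hamming_close n) \<le>
      2 powr (real n / 5) * (3 ^ (n div 2) / 2 ^ n)"
    by (intro mult_left_mono rect_hamming_close_le) simp
  also have "\<dots> \<le> 1"
    using two_powr_mult_three_power_le[of n] by (simp add: field_simps)
  finally show ?thesis using pos by (simp add: field_simps)
qed

section \<open>Monochromatic rectangles of oracle protocols\<close>

definition dense_mono_subrect :: "('x \<Rightarrow> 'y \<Rightarrow> bool) \<Rightarrow> 'x set \<Rightarrow> 'y set \<Rightarrow> real \<Rightarrow> bool" where
  "dense_mono_subrect f S U \<delta> \<longleftrightarrow> (\<exists>S'\<subseteq>S. \<exists>U'\<subseteq>U. (\<exists>b. \<forall>x\<in>S'. \<forall>y\<in>U'. f x y = b) \<and>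
     \<delta> * (real (card S) * real (card U)) \<le> real (card S') * real (card U'))"

lemma dense_mono_subrect_const:
  "\<forall>x\<in>S. \<forall>y\<in>U. f x y = b \<Longrightarrow> dense_mono_subrect f S U 1"
  unfolding dense_mono_subrect_def by auto

lemma dense_mono_subrect_weaken:
  assumes "dense_mono_subrect f S U \<delta>" "\<delta>' \<le> \<delta>"
  shows "dense_mono_subrect f S U \<delta>'"
proof -
  have "\<delta>' * (real (card S) * real (card U)) \<le> \<delta> * (real (card S) * real (card U))"
    using assms(2) by (intro mult_right_mono) auto
  with assms(1) show ?thesis unfolding dense_mono_subrect_def by (meson order_trans)
qed

lemma dense_mono_subrect_cong:
  assumes "\<forall>x\<in>S. \<forall>y\<in>U. f x y = g x y" "dense_mono_subrect g S U \<delta>"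
  shows "dense_mono_subrect f S U \<delta>"
  using assms unfolding dense_mono_subrect_def by (metis subsetD)

lemma dense_mono_subrect_subset:
  assumes "S' \<subseteq> S" "U' \<subseteq> U" "\<alpha> * (real (card S) * real (card U)) \<le> real (card S') * real (card U')"
    and "dense_mono_subrect f S' U' \<beta>" "0 \<le> \<beta>"
  shows "dense_mono_subrect f S U (\<alpha> * \<beta>)"
proof -
  obtain S'' U'' b where sub: "S'' \<subseteq> S'" "U'' \<subseteq> U'" and const: "\<forall>x\<in>S''. \<forall>y\<in>U''. f x y = b"
    and large: "\<beta> * (real (card S') * real (card U')) \<le> real (card S'') * real (card U'')"
    using assms(4) unfolding dense_mono_subrect_def by blast
  have "\<alpha> * \<beta> * (real (card S) * real (card U)) \<le> \<beta> * (real (card S') * real (card U'))"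
    using mult_left_mono[OF assms(3,5)] by (simp add: ac_simps)
  with large have "\<alpha> * \<beta> * (real (card S) * real (card U)) \<le> real (card S'') * real (card U'')"
    by linarith
  moreover have "S'' \<subseteq> S" "U'' \<subseteq> U" using sub assms(1,2) by auto
  ultimately show ?thesis using const unfolding dense_mono_subrect_def by blast
qed

lemma dense_mono_subrect_branch:
  assumes "dense_mono_subrect q S U \<alpha>"
    and "\<And>b S' U'. S' \<subseteq> S \<Longrightarrow> U' \<subseteq> U \<Longrightarrow> dense_mono_subrect (g b) S' U' \<beta>" "0 \<le> \<beta>"
  shows "dense_mono_subrect (\<lambda>x y. g (q x y) x y) S U (\<alpha> * \<beta>)"
proof -
  obtain S' U' b where S'U': "S' \<subseteq> S" "U' \<subseteq> U" "\<forall>x\<in>S'. \<forall>y\<in>U'. q x y = b"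
    "\<alpha> * (real (card S) * real (card U)) \<le> real (card S') * real (card U')"
    using assms(1) unfolding dense_mono_subrect_def by blast
  have "dense_mono_subrect (\<lambda>x y. g (q x y) x y) S' U' \<beta>"
    using S'U'(3) by (intro dense_mono_subrect_cong[OF _ assms(2)[OF S'U'(1,2), where b = b]]) simp
  then show ?thesis using dense_mono_subrect_subset[OF S'U'(1,2,4) _ assms(3)] by blast
qed

lemma card_le_twice_card_fiber:
  fixes p :: "'a \<Rightarrow> bool"
  assumes "finite S"
  obtains b where "card S \<le> 2 * card {x \<in> S. p x = b}"
proof -
  have "card S = card {x \<in> S. p x = True} + card {x \<in> S. p x = False}"
    using assms by (subst card_Un_disjoint[symmetric]) (auto intro: arg_cong[where f = card])
  then show thesis using that[of True] that[of False] by linarith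
qed

lemma dense_mono_subrect_left:
  assumes "finite S"
  shows "dense_mono_subrect (\<lambda>x y. p x) S U (1/2)"
proof -
  obtain b where "card S \<le> 2 * card {x \<in> S. p x = b}"
    using card_le_twice_card_fiber[OF assms] by blast
  then have "real (card S) \<le> 2 * real (card {x \<in> S. p x = b})"
    by (metis of_nat_le_iff of_nat_mult of_nat_numeral)
  then have "real (card S) * real (card U) \<le> 2 * real (card {x \<in> S. p x = b}) * real (card U)"
    by (rule mult_right_mono) simp
  then have "1/2 * (real (card S) * real (card U)) \<le> real (card {x \<in> S. p x = b}) * real (card U)"
    by simp
  moreover have "dense_mono_subrect (\<lambda>x y. p x) {x \<in> S. p x = b} U 1"
    by (intro dense_mono_subrect_const[where b = b]) auto
  ultimately show ?thesis
    using dense_mono_subrect_subset[of "{x \<in> S. p x = b}" S U U "1/2" _ 1] by simp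
qed

lemma dense_mono_subrect_right:
  assumes "finite U"
  shows "dense_mono_subrect (\<lambda>x y. p y) S U (1/2)"
proof -
  obtain b where "card U \<le> 2 * card {y \<in> U. p y = b}"
    using card_le_twice_card_fiber[OF assms] by blast
  then have "real (card U) \<le> 2 * real (card {y \<in> U. p y = b})"
    by (metis of_nat_le_iff of_nat_mult of_nat_numeral)
  then have "real (card S) * real (card U) \<le> real (card S) * (2 * real (card {y \<in> U. p y = b}))"
    by (rule mult_left_mono) simp
  then have "1/2 * (real (card S) * real (card U)) \<le> real (card S) * real (card {y \<in> U. p y = b})"
    by simp
  moreover have "dense_mono_subrect (\<lambda>x y. p y) S {y \<in> U. p y = b} 1"
    by (intro dense_mono_subrect_const[where b = b]) auto
  ultimately show ?thesis
    using dense_mono_subrect_subset[of S S "{y \<in> U. p y = b}" U "1/2" _ 1] by simp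
qed

lemma card_Diff_ge_if_card_Int_le:
  assumes "finite S" "real (card (S \<inter> A)) \<le> \<epsilon> * real (card S)"
  shows "(1 - \<epsilon>) * real (card S) \<le> real (card (S - A))"
proof -
  have "card S = card (S \<inter> A) + card (S - A)"
    using assms(1) by (rule card_Int_Diff)
  then show ?thesis using assms(2) by (simp add: algebra_simps)
qed

lemma dense_mono_subrect_Diff_left:
  assumes "finite S" "real (card (S \<inter> A)) \<le> \<epsilon> * real (card S)"
    and "dense_mono_subrect q (S - A) U \<beta>" "0 \<le> \<beta>"
  shows "dense_mono_subrect q S U ((1 - \<epsilon>) * \<beta>)"
proof -
  have "(1 - \<epsilon>) * real (card S) \<le> real (card (S - A))"
    by (rule card_Diff_ge_if_card_Int_le[OF assms(1,2)])
  then have "(1 - \<epsilon>) * (real (card S) * real (card U)) \<le> real (card (S - A)) * real (card U)"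
    by (simp add: mult_right_mono flip: mult.assoc)
  then show ?thesis using assms(3,4) by (intro dense_mono_subrect_subset[of "S - A" S U U]) auto
qed

lemma dense_mono_subrect_Diff_right:
  assumes "finite U" "real (card (U \<inter> B)) \<le> \<epsilon> * real (card U)"
    and "dense_mono_subrect q S (U - B) \<beta>" "0 \<le> \<beta>"
  shows "dense_mono_subrect q S U ((1 - \<epsilon>) * \<beta>)"
proof -
  have "(1 - \<epsilon>) * real (card U) \<le> real (card (U - B))"
    by (rule card_Diff_ge_if_card_Int_le[OF assms(1,2)])
  then have "real (card S) * ((1 - \<epsilon>) * real (card U)) \<le> real (card S) * real (card (U - B))"
    by (rule mult_left_mono) simp
  then have "(1 - \<epsilon>) * (real (card S) * real (card U)) \<le> real (card S) * real (card (U - B))"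
    by (simp add: mult.left_commute)
  then show ?thesis using assms(3,4) by (intro dense_mono_subrect_subset[of S S "U - B" U]) auto
qed

text \<open>Either some rectangle of the cover meets \<open>S \<times> U\<close> in an \<open>\<epsilon>\<close>-fraction of each side, giving
a 1-rectangle, or every rectangle can be avoided by discarding less than an \<open>\<epsilon>\<close>-fraction of one
side, which in the end leaves a 0-rectangle.\<close>
lemma dense_mono_subrect_cover:
  assumes "finite Q" "finite S" "finite U" "0 \<le> \<epsilon>" "\<epsilon> \<le> 1"
    and "\<forall>x\<in>S. \<forall>y\<in>U. q x y \<longleftrightarrow> (\<exists>(A, B)\<in>Q. x \<in> A \<and> y \<in> B)"
  shows "dense_mono_subrect q S U (\<epsilon>\<^sup>2 * (1 - \<epsilon>) ^ card Q)"
  using assms(1-3,6)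
proof (induction Q arbitrary: S U rule: finite_induct)
  case empty
  then have "dense_mono_subrect q S U 1" by (intro dense_mono_subrect_const) auto
  then show ?case
    by (rule dense_mono_subrect_weaken) (use assms(4,5) in \<open>simp add: power_le_one\<close>)
next
  case (insert R Q)
  obtain A B where R: "R = (A, B)" by fastforce
  let ?s = "real (card S)" and ?u = "real (card U)"
  have \<beta>: "0 \<le> \<epsilon>\<^sup>2 * (1 - \<epsilon>) ^ card Q" using assms(5) by simp
  have card: "card (insert R Q) = Suc (card Q)" using insert.hyps by simp
  consider "\<epsilon> * ?s \<le> card (S \<inter> A)" "\<epsilon> * ?u \<le> card (U \<inter> B)"
    | "card (S \<inter> A) \<le> \<epsilon> * ?s" | "card (U \<inter> B) \<le> \<epsilon> * ?u" by linarith
  then show ?case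
  proof cases
    case 1
    have "(\<epsilon> * ?s) * (\<epsilon> * ?u) \<le> real (card (S \<inter> A)) * real (card (U \<inter> B))"
      using 1 assms(4) by (intro mult_mono) auto
    then have "\<epsilon>\<^sup>2 * (?s * ?u) \<le> real (card (S \<inter> A)) * real (card (U \<inter> B))"
      by (simp add: power2_eq_square ac_simps)
    moreover have "dense_mono_subrect q (S \<inter> A) (U \<inter> B) 1"
      using insert.prems(3) R by (intro dense_mono_subrect_const[where b = True]) auto
    ultimately have "dense_mono_subrect q S U (\<epsilon>\<^sup>2 * 1)"
      by (intro dense_mono_subrect_subset) auto
    then show ?thesis
      by (rule dense_mono_subrect_weaken) (use assms(4,5) in \<open>simp add: mult_left_le power_le_one\<close>)
  next
    case 2
    have "dense_mono_subrect q (S - A) U (\<epsilon>\<^sup>2 * (1 - \<epsilon>) ^ card Q)"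
      using insert.prems R by (intro insert.IH) auto
    with 2 have "dense_mono_subrect q S U ((1 - \<epsilon>) * (\<epsilon>\<^sup>2 * (1 - \<epsilon>) ^ card Q))"
      using \<beta> by (intro dense_mono_subrect_Diff_left[OF insert.prems(1)])
    then show ?thesis using card by (simp add: ac_simps)
  next
    case 3
    have "dense_mono_subrect q S (U - B) (\<epsilon>\<^sup>2 * (1 - \<epsilon>) ^ card Q)"
      using insert.prems R by (intro insert.IH) auto
    with 3 have "dense_mono_subrect q S U ((1 - \<epsilon>) * (\<epsilon>\<^sup>2 * (1 - \<epsilon>) ^ card Q))"
      using \<beta> by (intro dense_mono_subrect_Diff_right[OF insert.prems(2)])
    then show ?thesis using card by (simp add: ac_simps)
  qed
qed

lemma dense_mono_subrect_cover_card_le: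
  assumes "finite Q" "card Q \<le> 2 ^ k" "finite S" "finite U"
    and "\<forall>x\<in>S. \<forall>y\<in>U. q x y \<longleftrightarrow> (\<exists>(A, B)\<in>Q. x \<in> A \<and> y \<in> B)"
  shows "dense_mono_subrect q S U (1 / 2 ^ (2 * k + 3))"
proof -
  define \<epsilon> :: real where "\<epsilon> = 1 / 2 ^ (k + 1)"
  have "(1::real) \<le> 2 ^ (k + 1)" by (rule one_le_power) simp
  then have \<epsilon>: "0 \<le> \<epsilon>" "\<epsilon> \<le> 1" by (simp_all add: \<epsilon>_def)
  have "1 - real (card Q) * \<epsilon> \<le> (1 - \<epsilon>) ^ card Q"
    using Bernoulli_inequality[of "- \<epsilon>" "card Q"] \<epsilon> by simp
  moreover have "real (card Q) * \<epsilon> \<le> 1/2"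
    using assms(2) by (simp add: \<epsilon>_def field_simps flip: of_nat_le_iff)
  ultimately have "\<epsilon>\<^sup>2 * (1/2) \<le> \<epsilon>\<^sup>2 * (1 - \<epsilon>) ^ card Q"
    by (intro mult_left_mono) auto
  moreover have "\<epsilon>\<^sup>2 * (1/2) = 1 / 2 ^ (2 * k + 3)"
    by (simp add: \<epsilon>_def power_divide flip: power_mult power_add) (simp add: power_add)
  ultimately show ?thesis
    using dense_mono_subrect_cover[OF assms(1,3,4) \<epsilon> assms(5)] dense_mono_subrect_weaken by metis
qed

primrec accepting_rects :: "('x, 'y) proto \<Rightarrow> ('x set \<times> 'y set) list" where
  "accepting_rects (Leaf b) = (if b then [(UNIV, UNIV)] else [])"
| "accepting_rects (Alice f l r) =
     map (\<lambda>R. (fst R - Collect f, snd R)) (accepting_rects l) @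
     map (\<lambda>R. (fst R \<inter> Collect f, snd R)) (accepting_rects r)"
| "accepting_rects (Bob g l r) =
     map (\<lambda>R. (fst R, snd R - Collect g)) (accepting_rects l) @
     map (\<lambda>R. (fst R, snd R \<inter> Collect g)) (accepting_rects r)"
| "accepting_rects (Oracle A B P a b l r) = []"

lemma eval_iff_accepting_rects:
  "plain T \<Longrightarrow> eval T x y \<longleftrightarrow> (\<exists>R\<in>set (accepting_rects T). x \<in> fst R \<and> y \<in> snd R)"
proof (induction T)
  case (Alice f l r)
  then show ?case by (cases "f x") (simp_all add: bex_Un)
next
  case (Bob g l r)
  then show ?case by (cases "g y") (simp_all add: bex_Un)
qed auto

lemma length_accepting_rects: "length (accepting_rects T) \<le> 2 ^ depth T"
proof -
  have "2 ^ a + 2 ^ b \<le> (2::nat) ^ Suc (max a b)" for a b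
  proof -
    have "(2::nat) ^ a \<le> 2 ^ max a b" "(2::nat) ^ b \<le> 2 ^ max a b"
      by (simp_all add: power_increasing)
    then show ?thesis by (simp only: power_Suc mult_2 add_mono)
  qed
  then show ?thesis
    by (induction T) (auto intro: order_trans[OF add_mono])
qed

text \<open>A nondeterministic protocol of cost \<open>m\<close> is a cover of the 1-entries by \<open>2 ^ m\<close> rectangles:
\<open>2 ^ k\<close> advice strings, each with at most \<open>2 ^ (m - k)\<close> accepting leaves.\<close>
lemma nd_protocol_cover:
  fixes X :: "'x set" and Y :: "'y set"
  assumes "nd_protocol X Y P m"
  obtains Q where "finite Q" "card Q \<le> 2 ^ m"
    "\<forall>x\<in>X. \<forall>y\<in>Y. P x y \<longleftrightarrow> (\<exists>(A, B)\<in>Q. x \<in> A \<and> y \<in> B)"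
proof -
  obtain k and \<pi> :: "bool list \<Rightarrow> ('x, 'y) proto"
    where \<pi>: "\<forall>a. length a = k \<longrightarrow> plain (\<pi> a) \<and> k + depth (\<pi> a) \<le> m"
    and P: "\<forall>x\<in>X. \<forall>y\<in>Y. P x y \<longleftrightarrow> (\<exists>a. length a = k \<and> eval (\<pi> a) x y)"
    using assms unfolding nd_protocol_def by blast
  define advice where "advice = {a :: bool list. length a = k}"
  define Q where "Q = (\<Union>a\<in>advice. set (accepting_rects (\<pi> a)))"
  have advice: "finite advice" "card advice = 2 ^ k"
    using finite_bits card_bits by (simp_all add: advice_def bits_def)
  have leaves: "card (set (accepting_rects (\<pi> a))) \<le> 2 ^ (m - k)" if "a \<in> advice" for a
  proof -
    have "card (set (accepting_rects (\<pi> a))) \<le> length (accepting_rects (\<pi> a))"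
      by (rule card_length)
    also have "\<dots> \<le> 2 ^ depth (\<pi> a)" by (rule length_accepting_rects)
    also have "\<dots> \<le> 2 ^ (m - k)"
      using \<pi> that by (intro power_increasing) (auto simp: advice_def)
    finally show ?thesis .
  qed
  have finite: "finite Q" using advice(1) by (simp add: Q_def)
  have "card Q \<le> (\<Sum>a\<in>advice. card (set (accepting_rects (\<pi> a))))"
    unfolding Q_def by (rule card_UN_le[OF advice(1)])
  also have "\<dots> \<le> card advice * 2 ^ (m - k)"
    using sum_bounded_above[of advice, OF leaves] by simp
  also have "\<dots> = 2 ^ m"
    using advice(2) \<pi>[rule_format, of "replicate k False"] by (simp flip: power_add)
  finally have "card Q \<le> 2 ^ m" .
  moreover have "\<forall>x\<in>X. \<forall>y\<in>Y. P x y \<longleftrightarrow> (\<exists>(A, B)\<in>Q. x \<in> A \<and> y \<in> B)"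
  proof (intro ballI)
    fix x y assume "x \<in> X" "y \<in> Y"
    have "P x y \<longleftrightarrow> (\<exists>a\<in>advice. eval (\<pi> a) x y)"
      using P \<open>x \<in> X\<close> \<open>y \<in> Y\<close> by (simp add: advice_def)
    also have "\<dots> \<longleftrightarrow> (\<exists>a\<in>advice. \<exists>R\<in>set (accepting_rects (\<pi> a)). x \<in> fst R \<and> y \<in> snd R)"
      using \<pi> by (intro bex_cong refl) (simp add: advice_def eval_iff_accepting_rects)
    also have "\<dots> \<longleftrightarrow> (\<exists>(A, B)\<in>Q. x \<in> A \<and> y \<in> B)"
      unfolding Q_def split_def by blast
    finally show "P x y \<longleftrightarrow> (\<exists>(A, B)\<in>Q. x \<in> A \<and> y \<in> B)" .
  qed
  ultimately show thesis by (rule that[OF finite])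
qed

lemma nd_protocol_0_const:
  fixes X :: "'x set" and Y :: "'y set"
  assumes "nd_protocol X Y P 0"
  obtains b where "\<forall>x\<in>X. \<forall>y\<in>Y. P x y = b"
proof -
  obtain k and \<pi> :: "bool list \<Rightarrow> ('x, 'y) proto"
    where \<pi>: "\<forall>a. length a = k \<longrightarrow> plain (\<pi> a) \<and> k + depth (\<pi> a) \<le> 0"
    and P: "\<forall>x\<in>X. \<forall>y\<in>Y. P x y \<longleftrightarrow> (\<exists>a. length a = k \<and> eval (\<pi> a) x y)"
    using assms unfolding nd_protocol_def by blast
  have "k = 0" using \<pi>[rule_format, of "replicate k False"] by simp
  with \<pi> have "depth (\<pi> []) = 0" by auto
  then obtain b where "\<pi> [] = Leaf b" by (cases "\<pi> []") auto
  with P \<open>k = 0\<close> have "\<forall>x\<in>X. \<forall>y\<in>Y. P x y = b" by simp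
  then show thesis by (rule that)
qed

lemma nd_protocol_Ncost:
  assumes "Ncost X Y P = enat k"
  shows "nd_protocol X Y P k"
proof -
  let ?M = "enat ` {m. nd_protocol X Y P m}"
  have "?M \<noteq> {}"
  proof
    assume "?M = {}"
    then have "Ncost X Y P = \<infinity>" by (simp add: Ncost_def top_enat_def)
    with assms show False by simp
  qed
  then have "Inf ?M \<in> ?M" by (auto intro: wellorder_InfI)
  then show ?thesis using assms by (auto simp: Ncost_def)
qed

lemma dense_mono_subrect_Ncost:
  assumes "Ncost A B P = enat k" "a ` S \<subseteq> A" "b ` U \<subseteq> B" "finite S" "finite U"
  shows "dense_mono_subrect (\<lambda>x y. P (a x) (b y)) S U (1 / 2 ^ (5 * k))"
proof (cases "k = 0")
  case True
  then obtain c where "\<forall>u\<in>A. \<forall>v\<in>B. P u v = c"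
    using nd_protocol_0_const nd_protocol_Ncost[OF assms(1)] by blast
  then have "dense_mono_subrect (\<lambda>x y. P (a x) (b y)) S U 1"
    using assms(2,3) by (intro dense_mono_subrect_const[where b = c]) (auto simp: image_subset_iff)
  then show ?thesis using True by simp
next
  case False
  obtain Q where Q: "finite Q" "card Q \<le> 2 ^ k"
    "\<forall>u\<in>A. \<forall>v\<in>B. P u v \<longleftrightarrow> (\<exists>(C, D)\<in>Q. u \<in> C \<and> v \<in> D)"
    by (rule nd_protocol_cover[OF nd_protocol_Ncost[OF assms(1)]])
  let ?Q = "(\<lambda>(C, D). (a -` C, b -` D)) ` Q"
  have "card ?Q \<le> 2 ^ k" using card_image_le[OF Q(1)] Q(2) by (rule order_trans)
  moreover have "\<forall>x\<in>S. \<forall>y\<in>U. P (a x) (b y) \<longleftrightarrow> (\<exists>(C, D)\<in>?Q. x \<in> C \<and> y \<in> D)"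
  proof (intro ballI)
    fix x y assume "x \<in> S" "y \<in> U"
    then have "a x \<in> A" "b y \<in> B" using assms(2,3) by auto
    then show "P (a x) (b y) \<longleftrightarrow> (\<exists>(C, D)\<in>?Q. x \<in> C \<and> y \<in> D)" using Q(3) by (auto simp: split_def)
  qed
  ultimately have "dense_mono_subrect (\<lambda>x y. P (a x) (b y)) S U (1 / 2 ^ (2 * k + 3))"
    by (rule dense_mono_subrect_cover_card_le[OF finite_imageI[OF Q(1)] _ assms(4,5)])
  moreover have "(2::real) ^ (2 * k + 3) \<le> 2 ^ (5 * k)"
    using False by (intro power_increasing) auto
  ultimately show ?thesis
    by (elim dense_mono_subrect_weaken) (simp add: divide_left_mono)
qed

lemma npcost_node_split:
  assumes "w + max (npcost l) (npcost r) \<le> enat c"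
  obtains k where "w = enat k" "k \<le> c" "npcost l \<le> enat (c - k)" "npcost r \<le> enat (c - k)"
  using assms by (cases w; cases "npcost l"; cases "npcost r") auto

lemma dense_mono_subrect_eval_branch:
  assumes cost: "w + max (npcost l) (npcost r) \<le> enat c"
    and node: "\<And>k. w = enat k \<Longrightarrow> dense_mono_subrect q S U (1 / 2 ^ (5 * k))"
    and children: "\<And>T c' S' U'. T \<in> {l, r} \<Longrightarrow> npcost T \<le> enat c' \<Longrightarrow> S' \<subseteq> S \<Longrightarrow> U' \<subseteq> U \<Longrightarrow>
      dense_mono_subrect (eval T) S' U' (1 / 2 ^ (5 * c'))"
  shows "dense_mono_subrect (\<lambda>x y. eval (if q x y then r else l) x y) S U (1 / 2 ^ (5 * c))"
proof -
  obtain k where k: "w = enat k" "k \<le> c"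
    and cost_children: "npcost l \<le> enat (c - k)" "npcost r \<le> enat (c - k)"
    using cost by (rule npcost_node_split)
  have "dense_mono_subrect (\<lambda>x y. eval (if q x y then r else l) x y) S U
      (1 / 2 ^ (5 * k) * (1 / 2 ^ (5 * (c - k))))"
  proof (rule dense_mono_subrect_branch[where g = "\<lambda>t. eval (if t then r else l)"])
    show "dense_mono_subrect q S U (1 / 2 ^ (5 * k))" by (rule node[OF k(1)])
    show "dense_mono_subrect (eval (if t then r else l)) S' U' (1 / 2 ^ (5 * (c - k)))"
      if "S' \<subseteq> S" "U' \<subseteq> U" for t S' U'
      using children cost_children that by (cases t) auto
  qed simp
  moreover have "5 * k + 5 * (c - k) = 5 * c" using k(2) by simp
  then have "1 / 2 ^ (5 * k) * (1 / 2 ^ (5 * (c - k))) = (1 / 2 ^ (5 * c) :: real)"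
    by (metis power_add power_one_over)
  ultimately show ?thesis by simp
qed

lemma dense_mono_subrect_eval:
  fixes T :: "('x, 'y) proto"
  assumes "finite X" "finite Y"
  shows "wf_oracles X Y T \<Longrightarrow> npcost T \<le> enat c \<Longrightarrow> S \<subseteq> X \<Longrightarrow> U \<subseteq> Y \<Longrightarrow>
    dense_mono_subrect (eval T) S U (1 / 2 ^ (5 * c))"
proof (induction T arbitrary: c S U)
  case (Leaf b)
  have "dense_mono_subrect (eval (Leaf b)) S U 1"
    by (intro dense_mono_subrect_const[where b = b]) simp
  then show ?case by (rule dense_mono_subrect_weaken) simp
next
  case (Alice f l r)
  have "finite S" using Alice.prems(3) assms(1) finite_subset by blast
  have eval: "eval (Alice f l r) = (\<lambda>x y. eval (if f x then r else l) x y)"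
    by (simp add: fun_eq_iff)
  show ?case unfolding eval
  proof (rule dense_mono_subrect_eval_branch)
    show "1 + max (npcost l) (npcost r) \<le> enat c" using Alice.prems(2) by simp
    show "dense_mono_subrect (\<lambda>x y. f x) S U (1 / 2 ^ (5 * k))" if "1 = enat k" for k
    proof -
      have "k = 1" using that by (metis enat.inject one_enat_def)
      then show ?thesis
        by (intro dense_mono_subrect_weaken[OF dense_mono_subrect_left[OF \<open>finite S\<close>]]) simp
    qed
  qed (use Alice.IH Alice.prems in auto)
next
  case (Bob g l r)
  have "finite U" using Bob.prems(4) assms(2) finite_subset by blast
  have eval: "eval (Bob g l r) = (\<lambda>x y. eval (if g y then r else l) x y)"
    by (simp add: fun_eq_iff)
  show ?case unfolding eval
  proof (rule dense_mono_subrect_eval_branch)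
    show "1 + max (npcost l) (npcost r) \<le> enat c" using Bob.prems(2) by simp
    show "dense_mono_subrect (\<lambda>x y. g y) S U (1 / 2 ^ (5 * k))" if "1 = enat k" for k
    proof -
      have "k = 1" using that by (metis enat.inject one_enat_def)
      then show ?thesis
        by (intro dense_mono_subrect_weaken[OF dense_mono_subrect_right[OF \<open>finite U\<close>]]) simp
    qed
  qed (use Bob.IH Bob.prems in auto)
next
  case (Oracle A B P a b l r)
  have "a ` X \<subseteq> A" "b ` Y \<subseteq> B" using Oracle.prems(1) by simp_all
  then have "a ` S \<subseteq> A" "b ` U \<subseteq> B"
    using Oracle.prems(3,4) by (meson image_mono order_trans)+
  moreover have "finite S" "finite U"
    using Oracle.prems(3,4) assms finite_subset by blast+
  ultimately have node: "dense_mono_subrect (\<lambda>x y. P (a x) (b y)) S U (1 / 2 ^ (5 * k))"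
    if "Ncost A B P = enat k" for k
    using that by (intro dense_mono_subrect_Ncost)
  have eval: "eval (Oracle A B P a b l r) = (\<lambda>x y. eval (if P (a x) (b y) then r else l) x y)"
    by (simp add: fun_eq_iff)
  show ?case unfolding eval
  proof (rule dense_mono_subrect_eval_branch[OF _ node])
    show "Ncost A B P + max (npcost l) (npcost r) \<le> enat c" using Oracle.prems(2) by simp
  qed (use Oracle.IH Oracle.prems in auto)
qed

lemma dense_mono_subrect_le_rect:
  assumes "finite X" "finite Y" "X \<noteq> {}" "Y \<noteq> {}" "dense_mono_subrect F X Y \<delta>"
  shows "\<delta> \<le> rect X Y F"
proof -
  obtain S T where "S \<subseteq> X" "T \<subseteq> Y" "\<exists>b. \<forall>x\<in>S. \<forall>y\<in>T. F x y = b"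
    and large: "\<delta> * (real (card X) * real (card Y)) \<le> real (card S) * real (card T)"
    using assms(5) unfolding dense_mono_subrect_def by blast
  then have "real (card (S \<times> T)) / real (card (X \<times> Y)) \<le> rect X Y F"
    by (intro mono_rect_le_rect assms(1,2)) (simp add: mono_rect_def)
  moreover have pos: "0 < real (card X) * real (card Y)"
    using assms(1-4) by (simp add: card_gt_0_iff)
  ultimately have "real (card S) * real (card T) \<le> rect X Y F * (real (card X) * real (card Y))"
    by (simp add: card_cartesian_product pos_divide_le_eq)
  with large have "\<delta> * (real (card X) * real (card Y)) \<le> rect X Y F * (real (card X) * real (card Y))"
    by linarith
  then show ?thesis using mult_le_cancel_right_pos[OF pos] by blast
qed

lemma log_inverse_rect_le_DNP:
  fixes X :: "'x set" and Y :: "'y set"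
  assumes "finite X" "finite Y" "X \<noteq> {}" "Y \<noteq> {}"
  shows "ereal (log 2 (1 / rect X Y F)) \<le> 5 * ereal_of_enat (DNP X Y F)"
proof (cases "DNP X Y F")
  case (enat m)
  let ?Ts = "{T :: ('x, 'y) proto. wf_oracles X Y T \<and> (\<forall>x\<in>X. \<forall>y\<in>Y. eval T x y = F x y)}"
  have DNP: "DNP X Y F = Inf (npcost ` ?Ts)" unfolding DNP_def ..
  have "npcost ` ?Ts \<noteq> {}"
  proof
    assume "npcost ` ?Ts = {}"
    with DNP have "DNP X Y F = \<infinity>" by (simp add: top_enat_def)
    with enat show False by simp
  qed
  then have "Inf (npcost ` ?Ts) \<in> npcost ` ?Ts" by (auto intro: wellorder_InfI)
  then obtain T where T: "wf_oracles X Y T" "\<forall>x\<in>X. \<forall>y\<in>Y. eval T x y = F x y" "npcost T = enat m"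
    using enat DNP by auto
  have "dense_mono_subrect (eval T) X Y (1 / 2 ^ (5 * m))"
    using T(3) by (intro dense_mono_subrect_eval[OF assms(1,2) T(1)]) simp_all
  then have "dense_mono_subrect F X Y (1 / 2 ^ (5 * m))"
    by (rule dense_mono_subrect_cong[rotated]) (use T(2) in auto)
  then have rect: "1 / 2 ^ (5 * m) \<le> rect X Y F"
    by (rule dense_mono_subrect_le_rect[OF assms])
  then have "0 < rect X Y F" by (smt (verit) divide_pos_pos zero_less_power)
  with rect have "1 / rect X Y F \<le> 2 ^ (5 * m)" by (simp add: field_simps)
  then have "log 2 (1 / rect X Y F) \<le> log 2 (2 ^ (5 * m))"
    using \<open>0 < rect X Y F\<close> by (intro log_le_cancel_iff[THEN iffD2]) auto
  then show ?thesis using enat by (simp add: log_nat_power)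
qed simp

lemma DNP_hamming_close_ge:
  "ereal (real n / 25) \<le> ereal_of_enat (DNP (bits n) (bits n) (hamming_close n))"
proof -
  have pos: "0 < 1 / rect (bits n) (bits n) (hamming_close n)"
    using inverse_rect_hamming_close_ge[of n] by (smt (verit) powr_gt_zero)
  have "real n / 5 = log 2 (2 powr (real n / 5))" by simp
  also have "\<dots> \<le> log 2 (1 / rect (bits n) (bits n) (hamming_close n))"
    using inverse_rect_hamming_close_ge pos by (intro log_le_cancel_iff[THEN iffD2]) auto
  moreover have "ereal (log 2 (1 / rect (bits n) (bits n) (hamming_close n))) \<le>
      5 * ereal_of_enat (DNP (bits n) (bits n) (hamming_close n))"
    using replicate_in_bits by (intro log_inverse_rect_le_DNP) auto
  ultimately have "ereal (real n / 5) \<le> 5 * ereal_of_enat (DNP (bits n) (bits n) (hamming_close n))"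
    by (metis ereal_less_eq(3) order_trans)
  then show ?thesis
    by (cases "DNP (bits n) (bits n) (hamming_close n)") simp_all
qed

section \<open>A cheap randomized protocol\<close>

lemma PPcost_le:
  assumes "rand_protocol X Y F \<mu> c \<epsilon>" "\<epsilon> < 1/2" "X \<noteq> {}" "Y \<noteq> {}"
  shows "PPcost X Y F \<le> real c + log 2 (1 / (1/2 - \<epsilon>))"
  unfolding PPcost_def
proof (rule cInf_lower)
  show "real c + log 2 (1 / (1/2 - \<epsilon>)) \<in> {real c + log 2 (1 / (1/2 - \<epsilon>)) | c \<epsilon>.
      \<epsilon> < 1/2 \<and> (\<exists>\<mu>. rand_protocol X Y F \<mu> c \<epsilon>)}"
    using assms(1,2) by blast
  show "bdd_below {real c + log 2 (1 / (1/2 - \<epsilon>)) | c \<epsilon>. \<epsilon> < 1/2 \<and> (\<exists>\<mu>. rand_protocol X Y F \<mu> c \<epsilon>)}"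
  proof (rule bdd_belowI[of _ 0], clarify)
    fix c' \<epsilon>' \<mu>' assume "\<epsilon>' < 1/2" "rand_protocol X Y F \<mu>' c' \<epsilon>'"
    moreover obtain x y where "x \<in> X" "y \<in> Y" using assms(3,4) by blast
    ultimately have "0 \<le> \<epsilon>'"
      unfolding rand_protocol_def by (meson measure_nonneg order_trans)
    with \<open>\<epsilon>' < 1/2\<close> have "0 \<le> log 2 (1 / (1/2 - \<epsilon>'))" by simp
    then show "0 \<le> real c' + log 2 (1 / (1/2 - \<epsilon>'))" by simp
  qed
qed

definition bit_eq_protocol :: "nat \<Rightarrow> (bool list, bool list) proto" where
  "bit_eq_protocol i = Alice (\<lambda>x. x ! i)
     (Bob (\<lambda>y. y ! i) (Leaf True) (Leaf False)) (Bob (\<lambda>y. y ! i) (Leaf False) (Leaf True))"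

lemma eval_bit_eq_protocol: "eval (bit_eq_protocol i) x y \<longleftrightarrow> x ! i = y ! i"
  and plain_bit_eq_protocol: "plain (bit_eq_protocol i)"
  and depth_bit_eq_protocol: "depth (bit_eq_protocol i) = 2"
  by (auto simp: bit_eq_protocol_def numeral_2_eq_2)

text \<open>Test a uniformly random coordinate, each with two outcomes of the coin, and reject outright
on one further outcome: the rejection breaks the tie at distance exactly \<open>n/2\<close>.\<close>
definition hamming_coins :: "nat \<Rightarrow> (nat \<times> bool) option set" where
  "hamming_coins n = insert None (Some ` ({..<n} \<times> UNIV))"

definition hamming_test :: "(nat \<times> bool) option \<Rightarrow> (bool list, bool list) proto" where
  "hamming_test j = (case j of None \<Rightarrow> Leaf False | Some (i, _) \<Rightarrow> bit_eq_protocol i)"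

definition hamming_protocol :: "nat \<Rightarrow> (bool list, bool list) proto pmf" where
  "hamming_protocol n = map_pmf hamming_test (pmf_of_set (hamming_coins n))"

lemma card_Some_times_bool: "card (Some ` (A \<times> (UNIV :: bool set))) = 2 * card A"
  by (simp add: card_image card_cartesian_product)

lemma card_hamming_coins: "card (hamming_coins n) = 2 * n + 1"
  by (simp add: hamming_coins_def card_Some_times_bool)

lemma card_hamming_test_errors:
  assumes "x \<in> bits n" "y \<in> bits n"
  shows "card {j \<in> hamming_coins n. eval (hamming_test j) x y \<noteq> hamming_close n x y} \<le> n"
    (is "card ?bad \<le> n")
proof -
  let ?D = "{i. i < n \<and> x ! i \<noteq> y ! i}"
  have D: "card ?D = hamming_dist x y" using assms by (simp add: hamming_dist_def bits_def)
  show ?thesis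
  proof (cases "hamming_close n x y")
    case True
    then have "?bad = insert None (Some ` (?D \<times> UNIV))"
      by (auto simp: hamming_coins_def hamming_test_def eval_bit_eq_protocol)
    then show ?thesis using True D by (simp add: card_Some_times_bool hamming_close_def)
  next
    case False
    have "card {i. i < n \<and> x ! i = y ! i} = card ({..<n} - ?D)"
      by (rule arg_cong[where f = card]) auto
    also have "\<dots> = n - hamming_dist x y"
      using D by (subst card_Diff_subset) auto
    finally have "card {i. i < n \<and> x ! i = y ! i} = n - hamming_dist x y" .
    moreover have "?bad = Some ` ({i. i < n \<and> x ! i = y ! i} \<times> UNIV)"
      using False by (auto simp: hamming_coins_def hamming_test_def eval_bit_eq_protocol)
    ultimately show ?thesis using False by (simp add: card_Some_times_bool hamming_close_def)
  qed
qed

lemma rand_protocol_hamming_close: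
  "rand_protocol (bits n) (bits n) (hamming_close n) (hamming_protocol n) 2 (real n / real (2 * n + 1))"
  unfolding rand_protocol_def
proof (intro conjI ballI)
  fix T assume "T \<in> set_pmf (hamming_protocol n)"
  then show "plain T" "depth T \<le> 2"
    by (auto simp: hamming_protocol_def hamming_coins_def hamming_test_def
        plain_bit_eq_protocol depth_bit_eq_protocol)
next
  fix x y assume "x \<in> bits n" "y \<in> bits n"
  have "finite (hamming_coins n)" "hamming_coins n \<noteq> {}" by (simp_all add: hamming_coins_def)
  then have "measure_pmf.prob (hamming_protocol n) {T. eval T x y \<noteq> hamming_close n x y} =
      real (card {j \<in> hamming_coins n. eval (hamming_test j) x y \<noteq> hamming_close n x y}) /
      real (card (hamming_coins n))"
    by (simp add: hamming_protocol_def measure_pmf_of_set Int_def)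
  also have "\<dots> \<le> real n / real (2 * n + 1)"
    using card_hamming_test_errors[OF \<open>x \<in> bits n\<close> \<open>y \<in> bits n\<close>]
    by (simp add: card_hamming_coins divide_right_mono)
  finally show "measure_pmf.prob (hamming_protocol n) {T. eval T x y \<noteq> hamming_close n x y}
      \<le> real n / real (2 * n + 1)" .
qed

lemma PPcost_hamming_close_le:
  assumes "2 \<le> n"
  shows "PPcost (bits n) (bits n) (hamming_close n) \<le> 6 * log 2 (real n)"
proof -
  have \<epsilon>: "real n / real (2 * n + 1) < 1/2" by (simp add: field_simps)
  have "bits n \<noteq> {}" using replicate_in_bits by blast
  from PPcost_le[OF rand_protocol_hamming_close \<epsilon> this this]
  have "PPcost (bits n) (bits n) (hamming_close n) \<le> 2 + log 2 (4 * real n + 2)"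
    by (simp add: field_simps)
  moreover have "log 2 (4 * real n + 2) \<le> log 2 (8 * real n)" using assms by simp
  moreover have "log 2 (8 * real n) = 3 + log 2 (real n)"
    using assms log_pow_cancel[of 2 3] by (simp add: log_mult)
  moreover have "1 \<le> log 2 (real n)" using assms by simp
  ultimately show ?thesis by linarith
qed

lemma nbit_family_bits: "nbit_family bits bits"
  unfolding nbit_family_def
  using replicate_in_bits by (auto simp: card_bits log_nat_power)

lemma not_in_PNP_if_DNP_linear:
  assumes "c > 0" and DNP: "\<forall>n\<ge>N0. ereal (c * real n) \<le> ereal_of_enat (DNP (Xs n) (Ys n) (G n))"
  shows "\<not> in_PNP Xs Ys G"
proof
  assume "in_PNP Xs Ys G"
  then obtain C k where
    upper: "\<forall>n\<ge>2. ereal_of_enat (DNP (Xs n) (Ys n) (G n)) \<le> ereal (C * log 2 (real n) ^ k)"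
    unfolding in_PNP_def by blast
  have "((\<lambda>n. C * log 2 (real n) ^ k / real n) \<longlongrightarrow> 0) at_top" by real_asymp
  then have "eventually (\<lambda>n. C * log 2 (real n) ^ k / real n < c) at_top"
    using \<open>c > 0\<close> by (rule order_tendstoD)
  then obtain N where N: "\<And>n. n \<ge> N \<Longrightarrow> C * log 2 (real n) ^ k / real n < c"
    unfolding eventually_at_top_linorder by blast
  define n where "n = max N (max 2 N0)"
  have "n \<ge> 2" "n \<ge> N0" by (simp_all add: n_def)
  have "C * log 2 (real n) ^ k < c * real n"
    using N[of n] \<open>n \<ge> 2\<close> by (simp add: n_def pos_divide_less_eq)
  moreover have "ereal (c * real n) \<le> ereal (C * log 2 (real n) ^ k)"
    using DNP[rule_format, OF \<open>n \<ge> N0\<close>] upper[rule_format, OF \<open>n \<ge> 2\<close>] by (rule order_trans)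
  ultimately show False by simp
qed

theorem theorem5p19:
  shows "\<exists>F :: nat \<Rightarrow> bool list \<Rightarrow> bool list \<Rightarrow> bool.
     (\<exists>C N0. \<forall>n\<ge>N0. PPcost (bits n) (bits n) (F n) \<le> C * log 2 (real n)) \<and>
     (\<exists>c>0. \<exists>N0. \<forall>n\<ge>N0. 2 powr (c * real n) \<le> 1 / rect (bits n) (bits n) (F n)) \<and>
     (\<exists>c>0. \<exists>N0. \<forall>n\<ge>N0. ereal (c * real n) \<le> ereal_of_enat (DNP (bits n) (bits n) (F n))) \<and>
     \<not> (\<forall>(Xs :: nat \<Rightarrow> bool list set) (Ys :: nat \<Rightarrow> bool list set) G.
           in_PP Xs Ys G \<longrightarrow> in_PNP Xs Ys G)"
proof (intro exI[of _ hamming_close] conjI)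
  show "\<exists>C N0. \<forall>n\<ge>N0. PPcost (bits n) (bits n) (hamming_close n) \<le> C * log 2 (real n)"
    using PPcost_hamming_close_le by blast
  show "\<exists>c>0. \<exists>N0. \<forall>n\<ge>N0. 2 powr (c * real n) \<le> 1 / rect (bits n) (bits n) (hamming_close n)"
    using inverse_rect_hamming_close_ge by (intro exI[of _ "1/5"]) auto
  show DNP: "\<exists>c>0. \<exists>N0. \<forall>n\<ge>N0.
      ereal (c * real n) \<le> ereal_of_enat (DNP (bits n) (bits n) (hamming_close n))"
    using DNP_hamming_close_ge by (intro exI[of _ "1/25"]) auto
  have "in_PP bits bits hamming_close"
    unfolding in_PP_def using nbit_family_bits PPcost_hamming_close_le
    by (intro conjI exI[of _ 6] exI[of _ 1]) auto
  moreover have "\<not> in_PNP bits bits hamming_close"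
    using DNP not_in_PNP_if_DNP_linear by blast
  ultimately show "\<not> (\<forall>(Xs :: nat \<Rightarrow> bool list set) (Ys :: nat \<Rightarrow> bool list set) G.
      in_PP Xs Ys G \<longrightarrow> in_PNP Xs Ys G)" by blast
qed

end
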